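(* Let $X$ be a topological space. The following are equivalent: (1) $X$ is dense-ultraconnected; (2) for every point $x\in X$, either $\overline{\{x\}}=X$, or the only open neighborhood of $x$ in the subspace $Y_x=\{x\}\cup(X\setminus\overline{\{x\}})$ is $Y_x$ itself; (3) for any two points $x,y\in X$, $x\in\overline{\{y\}}$ or $y\in\overline{\{x\}}$.
   Context: A space is ultraconnected if it contains no two disjoint non-empty closed subsets. A space $X$ is dense-ultraconnected if every dense subset of $X$ (with the subspace topology) is ultraconnected. *)

theory Defs
  imports "HOL-Analysis.Analysis"
begin

definition ultraconnected_space :: "'a topology \<Rightarrow> bool" where
  "ultraconnected_space X \<longleftrightarrow>
     \<not> (\<exists>A B. closedin X A \<and> closedin X B \<and> A \<noteq> {} \<and> B \<noteq> {} \<and> A \<inter> B = {})"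

definition dense_ultraconnected_space :: "'a topology \<Rightarrow> bool" where
  "dense_ultraconnected_space X \<longleftrightarrow>
     (\<forall>D. D \<subseteq> topspace X \<and> X closure_of D = topspace X
          \<longrightarrow> ultraconnected_space (subtopology X D))"

end

theory Submission
  imports Defs
begin

text \<open>A dense subspace of a space in which any two points are comparable in the specialization
order is again such a space, and in such a space two nonempty closed sets meet, since the closure of
the smaller of two points is contained in both. Conversely, if \<open>x\<close>, \<open>y\<close> are incomparable, then
\<open>{x, y}\<close> together with the complement of \<open>cl {x} \<union> cl {y}\<close> is dense, and its traces of
\<open>cl {x}\<close> and \<open>cl {y}\<close> are disjoint nonempty closed sets. Condition (2) is the pointwise form of
comparability: the only neighbourhood of \<open>x\<close> in \<open>Y\<^sub>x\<close> is \<open>Y\<^sub>x\<close> exactly when \<open>x\<close> lies in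
the closure of every point outside \<open>cl {x}\<close>.\<close>

definition specialization_comparable :: "'a topology \<Rightarrow> 'a set \<Rightarrow> bool" where
  "specialization_comparable X S \<longleftrightarrow>
     (\<forall>x\<in>S. \<forall>y\<in>S. x \<in> X closure_of {y} \<or> y \<in> X closure_of {x})"

lemma in_closure_of_singleton_self [simp]: "x \<in> X closure_of {x} \<longleftrightarrow> x \<in> topspace X"
  by (auto simp: in_closure_of)

lemma ultraconnected_space_subtopology_if_comparable:
  assumes comp: "specialization_comparable X S"
  shows "ultraconnected_space (subtopology X S)"
  unfolding ultraconnected_space_def
proof
  assume "\<exists>A B. closedin (subtopology X S) A \<and> closedin (subtopology X S) B
                \<and> A \<noteq> {} \<and> B \<noteq> {} \<and> A \<inter> B = {}"
  then obtain A B a b where A: "closedin X A" and B: "closedin X B"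
    and a: "a \<in> A \<inter> S" and b: "b \<in> B \<inter> S" and disj: "A \<inter> B \<inter> S = {}"
    by (fastforce simp: closedin_subtopology)
  have "X closure_of {a} \<subseteq> A" "X closure_of {b} \<subseteq> B"
    using A B a b by (simp_all add: closure_of_minimal)
  moreover have "a \<in> X closure_of {b} \<or> b \<in> X closure_of {a}"
    using comp a b by (auto simp: specialization_comparable_def)
  ultimately show False
    using a b disj by blast
qed

lemma comparable_if_dense_ultraconnected_space:
  assumes du: "dense_ultraconnected_space X"
  shows "specialization_comparable X (topspace X)"
  unfolding specialization_comparable_def
proof (intro ballI, rule ccontr)
  fix x y assume x: "x \<in> topspace X" and y: "y \<in> topspace X"
    and "\<not> (x \<in> X closure_of {y} \<or> y \<in> X closure_of {x})"
  then have nx: "x \<notin> X closure_of {y}" and ny: "y \<notin> X closure_of {x}" by auto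
  define W where "W = topspace X - (X closure_of {x} \<union> X closure_of {y})"
  define D where "D = {x} \<union> {y} \<union> W"
  have "W \<subseteq> X closure_of W"
    by (rule closure_of_subset) (auto simp: W_def)
  then have "X closure_of D = topspace X"
    using closure_of_subset_topspace[of X D] closure_of_Un[of X "{x} \<union> {y}" W]
      closure_of_Un[of X "{x}" "{y}"]
    unfolding D_def W_def by blast
  moreover have "D \<subseteq> topspace X"
    using x y by (auto simp: D_def W_def)
  ultimately have "ultraconnected_space (subtopology X D)"
    using du by (simp add: dense_ultraconnected_space_def)
  moreover have "closedin (subtopology X D) (X closure_of {z} \<inter> D)" for z
    by (auto simp: closedin_subtopology intro!: exI[of _ "X closure_of {z}"])
  moreover have "x \<in> X closure_of {x} \<inter> D" "y \<in> X closure_of {y} \<inter> D"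
    using x y by (auto simp: D_def)
  moreover have "(X closure_of {x} \<inter> D) \<inter> (X closure_of {y} \<inter> D) = {}"
    using nx ny x y by (auto simp: D_def W_def closure_of_subset)
  ultimately show False
    unfolding ultraconnected_space_def by blast
qed

lemma dense_ultraconnected_space_iff_comparable:
  "dense_ultraconnected_space X \<longleftrightarrow> specialization_comparable X (topspace X)"
proof
  assume "specialization_comparable X (topspace X)"
  then have "specialization_comparable X D" if "D \<subseteq> topspace X" for D
    using that by (auto simp: specialization_comparable_def)
  then show "dense_ultraconnected_space X"
    by (simp add: dense_ultraconnected_space_def ultraconnected_space_subtopology_if_comparable)
qed (rule comparable_if_dense_ultraconnected_space)

lemma neighbourhoods_in_subtopology_trivial_iff:
  assumes "x \<in> S" and "x \<in> topspace X"
  shows "(\<forall>U. openin (subtopology X S) U \<and> x \<in> U \<longrightarrow> U = S)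
         \<longleftrightarrow> (\<forall>y\<in>S. x \<in> X closure_of {y})"
proof
  assume nbhd: "\<forall>U. openin (subtopology X S) U \<and> x \<in> U \<longrightarrow> U = S"
  show "\<forall>y\<in>S. x \<in> X closure_of {y}"
  proof (intro ballI)
    fix y assume y: "y \<in> S"
    have "y \<in> T" if "x \<in> T" "openin X T" for T
    proof -
      have "T \<inter> S = S"
        using nbhd that assms by (simp add: openin_subtopology_Int)
      then show ?thesis using y by blast
    qed
    then show "x \<in> X closure_of {y}"
      using assms(2) by (auto simp: in_closure_of)
  qed
next
  assume "\<forall>y\<in>S. x \<in> X closure_of {y}"
  then show "\<forall>U. openin (subtopology X S) U \<and> x \<in> U \<longrightarrow> U = S"
    by (fastforce simp: openin_subtopology in_closure_of)
qed

lemma comparable_at_point_iff: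
  assumes x: "x \<in> topspace X"
  defines "Y \<equiv> {x} \<union> (topspace X - X closure_of {x})"
  shows "(X closure_of {x} = topspace X \<or>
           (\<forall>U. openin (subtopology X Y) U \<and> x \<in> U \<longrightarrow> U = Y))
         \<longleftrightarrow> (\<forall>y\<in>topspace X. x \<in> X closure_of {y} \<or> y \<in> X closure_of {x})"
proof -
  have "(\<forall>y\<in>Y. x \<in> X closure_of {y})
             \<longleftrightarrow> (\<forall>y\<in>topspace X. x \<in> X closure_of {y} \<or> y \<in> X closure_of {x})"
    using x by (auto simp: Y_def)
  moreover have "X closure_of {x} = topspace X
                 \<Longrightarrow> \<forall>y\<in>topspace X. x \<in> X closure_of {y} \<or> y \<in> X closure_of {x}"
    by blast
  ultimately show ?thesis
    using neighbourhoods_in_subtopology_trivial_iff[of x Y X] x by (auto simp: Y_def)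
qed

theorem theorem5p8:
  fixes X :: "'a topology"
  shows "(dense_ultraconnected_space X
           \<longleftrightarrow> (\<forall>x\<in>topspace X.
                  X closure_of {x} = topspace X \<or>
                  (\<forall>U. openin (subtopology X ({x} \<union> (topspace X - X closure_of {x}))) U \<and> x \<in> U
                        \<longrightarrow> U = {x} \<union> (topspace X - X closure_of {x}))))
       \<and> (dense_ultraconnected_space X
           \<longleftrightarrow> (\<forall>x\<in>topspace X. \<forall>y\<in>topspace X.
                  x \<in> X closure_of {y} \<or> y \<in> X closure_of {x}))"
  using comparable_at_point_iff[of _ X]
  by (simp add: dense_ultraconnected_space_iff_comparable specialization_comparable_def)

end
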